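(* Let $G$ be a graph with no massive edges and let $X=\{x_1,x_2,x_3,x_4\}\subseteq V(G)$ be the set of vertices with external momenta, all on-shell. Suppose $G$ has a $1$-separation $(A,B)$ with $A\cap B=\{v\}$, $X\cap(A\setminus\{v\})=\{x_1,x_2\}$ and $X\cap(B\setminus\{v\})=\{x_3,x_4\}$. Let $A'$ be $G[A]$ with the same external momenta and Schwinger parameters as in $G$ except that the momentum at $v$ is $\rho_{x_3}+\rho_{x_4}$, and let $B'$ be $G[B]$ with the same data as in $G$ except that the momentum at $v$ is $\rho_{x_1}+\rho_{x_2}$. Then $\phi_G=\phi_{A'}\psi_{B'}+\phi_{B'}\psi_{A'}$.
   Context: A $1$-separation is a pair $(A,B)$ with $A\cup B=V(G)$, $|A\cap B|\le1$ and no edge between $A\setminus B$ and $B\setminus A$. Each edge $e$ has a variable $\alpha_e$ and a mass $m_e$ (massive if $m_e\neq0$); each vertex $u$ has $\rho_u\in\mathbb{R}^4$, zero outside $X$, with $\sum_u\rho_u=0$. $\rho^2=\rho_1^2+\rho_2^2+\rho_3^2-\rho_4^2$ and $\rho_u$ is on-shell if $\rho_u^2=0$. $\psi_G=\sum_T\prod_{e\notin E(T)}\alpha_e$ over spanning trees $T$. A spanning 2-forest is an unordered pair $(T_1,T_2)$ of vertex-disjoint trees covering $V(G)$; $\rho^{H}=\sum_{u\in V(H)}\rho_u$; $\phi_G=\sum_{(T_1,T_2)}(\rho^{T_1})^2\prod_{e\notin E(T_1)\cup E(T_2)}\alpha_e+\psi_G\sum_e\alpha_em_e^2$. *)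

theory Defs
  imports "HOL-Analysis.Analysis"
begin

definition wf_graph :: "'v set \<Rightarrow> 'e set \<Rightarrow> ('e \<Rightarrow> 'v set) \<Rightarrow> bool" where
  "wf_graph V E ends \<longleftrightarrow> finite V \<and> finite E \<and>
     (\<forall>e\<in>E. ends e \<subseteq> V \<and> card (ends e) = 2)"

definition adj :: "('e \<Rightarrow> 'v set) \<Rightarrow> 'e set \<Rightarrow> ('v \<times> 'v) set" where
  "adj ends F = {(a, b). \<exists>e\<in>F. ends e = {a, b}}"

text \<open>An edge set is acyclic iff no edge lies on a cycle, i.e. removing any edge
  disconnects its endpoints.\<close>
definition acyclic_edges :: "('e \<Rightarrow> 'v set) \<Rightarrow> 'e set \<Rightarrow> bool" where
  "acyclic_edges ends F \<longleftrightarrow>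
     (\<forall>e\<in>F. \<forall>a b. ends e = {a, b} \<longrightarrow> (a, b) \<notin> (adj ends (F - {e}))\<^sup>*)"

definition is_tree :: "('e \<Rightarrow> 'v set) \<Rightarrow> 'v set \<Rightarrow> 'e set \<Rightarrow> bool" where
  "is_tree ends W F \<longleftrightarrow> W \<noteq> {} \<and> (\<forall>e\<in>F. ends e \<subseteq> W) \<and>
     (\<forall>u\<in>W. \<forall>w\<in>W. (u, w) \<in> (adj ends F)\<^sup>*) \<and> acyclic_edges ends F"

definition spanning_trees :: "'v set \<Rightarrow> 'e set \<Rightarrow> ('e \<Rightarrow> 'v set) \<Rightarrow> 'e set set" where
  "spanning_trees V E ends = {T. T \<subseteq> E \<and> is_tree ends V T}"

definition spanning_2forests ::
  "'v set \<Rightarrow> 'e set \<Rightarrow> ('e \<Rightarrow> 'v set) \<Rightarrow> ('v set \<times> 'e set) set set" where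
  "spanning_2forests V E ends =
     {{(W1, F1), (W2, F2)} | W1 F1 W2 F2.
        F1 \<subseteq> E \<and> F2 \<subseteq> E \<and> is_tree ends W1 F1 \<and> is_tree ends W2 F2 \<and>
        W1 \<inter> W2 = {} \<and> W1 \<union> W2 = V}"

definition mink_sq :: "real^4 \<Rightarrow> real" where
  "mink_sq x = (x$1)^2 + (x$2)^2 + (x$3)^2 - (x$4)^2"

definition psi :: "'v set \<Rightarrow> 'e set \<Rightarrow> ('e \<Rightarrow> 'v set) \<Rightarrow> ('e \<Rightarrow> real) \<Rightarrow> real" where
  "psi V E ends \<alpha> = (\<Sum>T\<in>spanning_trees V E ends. \<Prod>e\<in>E - T. \<alpha> e)"

text \<open>phi; for a 2-forest P, T1 is an (arbitrary) chosen member of the pair; the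
  value does not depend on the choice when the momenta sum to zero.\<close>
definition phi :: "'v set \<Rightarrow> 'e set \<Rightarrow> ('e \<Rightarrow> 'v set) \<Rightarrow> ('v \<Rightarrow> real^4)
     \<Rightarrow> ('e \<Rightarrow> real) \<Rightarrow> ('e \<Rightarrow> real) \<Rightarrow> real" where
  "phi V E ends \<rho> m \<alpha> =
     (\<Sum>P\<in>spanning_2forests V E ends.
        mink_sq (\<Sum>u\<in>fst (SOME t. t \<in> P). \<rho> u) * (\<Prod>e\<in>E - \<Union>(snd ` P). \<alpha> e))
     + psi V E ends \<alpha> * (\<Sum>e\<in>E. \<alpha> e * (m e)^2)"

definition induced_edges :: "'e set \<Rightarrow> ('e \<Rightarrow> 'v set) \<Rightarrow> 'v set \<Rightarrow> 'e set" where
  "induced_edges E ends A = {e\<in>E. ends e \<subseteq> A}"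

definition one_separation :: "'v set \<Rightarrow> 'e set \<Rightarrow> ('e \<Rightarrow> 'v set) \<Rightarrow> 'v set \<Rightarrow> 'v set \<Rightarrow> bool" where
  "one_separation V E ends A B \<longleftrightarrow> A \<union> B = V \<and> card (A \<inter> B) \<le> 1 \<and>
     \<not> (\<exists>e\<in>E. \<exists>a\<in>A - B. \<exists>b\<in>B - A. ends e = {a, b})"

end

theory Submission
  imports Defs
begin

text \<open>
  In a spanning 2-forest of G the tree avoiding the cut vertex v is connected without passing
  through v, so it lies entirely in A or entirely in B. If it lies in A, restricting the 2-forest
  to A gives a spanning 2-forest of G[A], and the edges of the other tree inside B form a spanning
  tree of G[B]; conversely a 2-forest of G[A] and a spanning tree of G[B] glue along v. This
  bijection multiplies the monomials of the edges left out, and the momentum through the tree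
  avoiding v is the same in G and in A', so with no masses the 2-forests of the first kind sum to
  phi(A') psi(B') and those of the second kind to phi(B') psi(A').
\<close>

lemma adj_Un: "adj ends (F \<union> G) = adj ends F \<union> adj ends G"
  unfolding adj_def by auto

lemma adj_mono: "F \<subseteq> G \<Longrightarrow> adj ends F \<subseteq> adj ends G"
  unfolding adj_def by auto

lemma adj_subset_Times: "\<forall>e\<in>F. ends e \<subseteq> A \<Longrightarrow> adj ends F \<subseteq> A \<times> A"
  unfolding adj_def by auto

lemma rtrancl_adj_closed:
  assumes "(x, y) \<in> (adj ends F)\<^sup>*" "x \<in> W" "\<forall>e\<in>F. ends e \<subseteq> W"
  shows "y \<in> W"
  using assms(1)
proof (induction rule: rtrancl_induct)
  case base
  then show ?case using assms(2) .
next
  case (step y z)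
  then show ?case using assms(3) unfolding adj_def by auto
qed

lemma rtrancl_Un_cut_vertex:
  assumes RA: "RA \<subseteq> A \<times> A" and RB: "RB \<subseteq> B \<times> B" and AB: "A \<inter> B = {v}"
    and path: "(x, y) \<in> (RA \<union> RB)\<^sup>*" and x: "x \<in> A"
  shows "(y \<in> A \<and> (x, y) \<in> RA\<^sup>*) \<or> (y \<in> B \<and> (x, v) \<in> RA\<^sup>* \<and> (v, y) \<in> RB\<^sup>*)"
  using path
proof (induction rule: rtrancl_induct)
  case base
  then show ?case using x by auto
next
  case (step y z)
  from step.IH show ?case
  proof
    assume y: "y \<in> A \<and> (x, y) \<in> RA\<^sup>*"
    show ?thesis
    proof (cases "(y, z) \<in> RA")
      case True
      then show ?thesis using y RA by (auto intro: rtrancl_into_rtrancl)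
    next
      case False
      then have yz: "(y, z) \<in> RB" using step.hyps(2) by auto
      then have "y = v" using y RB AB by auto
      then show ?thesis using y yz RB by auto
    qed
  next
    assume y: "y \<in> B \<and> (x, v) \<in> RA\<^sup>* \<and> (v, y) \<in> RB\<^sup>*"
    show ?thesis
    proof (cases "(y, z) \<in> RB")
      case True
      then show ?thesis using y RB by (auto intro: rtrancl_into_rtrancl)
    next
      case False
      then have yz: "(y, z) \<in> RA" using step.hyps(2) by auto
      then have "y = v" using y RA AB by auto
      then show ?thesis using y yz RA by (auto intro: rtrancl_into_rtrancl)
    qed
  qed
qed

corollary rtrancl_Un_cut_vertex_same_side:
  assumes "RA \<subseteq> A \<times> A" "RB \<subseteq> B \<times> B" "A \<inter> B = {v}"
    and "(x, y) \<in> (RA \<union> RB)\<^sup>*" "x \<in> A" "y \<in> A"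
  shows "(x, y) \<in> RA\<^sup>*"
  using rtrancl_Un_cut_vertex[OF assms(1-5)] assms(3,6) by auto

lemma acyclic_edges_Un_cut_vertex:
  assumes AB: "A \<inter> B = {v}" and FA: "\<forall>e\<in>FA. ends e \<subseteq> A" and FB: "\<forall>e\<in>FB. ends e \<subseteq> B"
  shows "acyclic_edges ends (FA \<union> FB) \<longleftrightarrow> acyclic_edges ends FA \<and> acyclic_edges ends FB"
proof
  assume "acyclic_edges ends (FA \<union> FB)"
  moreover have "\<And>e. (adj ends (FA - {e}))\<^sup>* \<subseteq> (adj ends (FA \<union> FB - {e}))\<^sup>*"
    and "\<And>e. (adj ends (FB - {e}))\<^sup>* \<subseteq> (adj ends (FA \<union> FB - {e}))\<^sup>*"
    by (intro rtrancl_mono adj_mono; auto)+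
  ultimately show "acyclic_edges ends FA \<and> acyclic_edges ends FB"
    unfolding acyclic_edges_def by blast
next
  assume acyc: "acyclic_edges ends FA \<and> acyclic_edges ends FB"
  show "acyclic_edges ends (FA \<union> FB)"
    unfolding acyclic_edges_def
  proof (intro ballI allI impI notI)
    fix e a b
    assume e: "e \<in> FA \<union> FB" and ab: "ends e = {a, b}"
      and path: "(a, b) \<in> (adj ends (FA \<union> FB - {e}))\<^sup>*"
    have RA: "adj ends (FA - {e}) \<subseteq> A \<times> A" and RB: "adj ends (FB - {e}) \<subseteq> B \<times> B"
      using FA FB by (intro adj_subset_Times; auto)+
    have path': "(a, b) \<in> (adj ends (FA - {e}) \<union> adj ends (FB - {e}))\<^sup>*"
      using path by (metis Un_Diff adj_Un)
    show False
    proof (cases "e \<in> FA")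
      case True
      then have "(a, b) \<in> (adj ends (FA - {e}))\<^sup>*"
        using rtrancl_Un_cut_vertex_same_side[OF RA RB AB path'] FA ab by auto
      then show False using acyc True ab unfolding acyclic_edges_def by blast
    next
      case False
      with e have "e \<in> FB" by auto
      moreover have "B \<inter> A = {v}" using AB by auto
      moreover have "(a, b) \<in> (adj ends (FB - {e}) \<union> adj ends (FA - {e}))\<^sup>*"
        using path' by (simp add: Un_commute)
      ultimately have "(a, b) \<in> (adj ends (FB - {e}))\<^sup>*"
        using rtrancl_Un_cut_vertex_same_side[OF RB RA] FB ab by blast
      then show False using acyc \<open>e \<in> FB\<close> ab unfolding acyclic_edges_def by blast
    qed
  qed
qed

lemma is_tree_Un_cut_vertex:
  assumes AB: "A \<inter> B = {v}" and FA: "\<forall>e\<in>FA. ends e \<subseteq> A" and FB: "\<forall>e\<in>FB. ends e \<subseteq> B"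
  shows "is_tree ends (A \<union> B) (FA \<union> FB) \<longleftrightarrow> is_tree ends A FA \<and> is_tree ends B FB"
proof -
  have BA: "B \<inter> A = {v}" using AB by auto
  have RA: "adj ends FA \<subseteq> A \<times> A" and RB: "adj ends FB \<subseteq> B \<times> B"
    using FA FB by (simp_all add: adj_subset_Times)
  have connected_iff:
    "(\<forall>u\<in>A \<union> B. \<forall>w\<in>A \<union> B. (u, w) \<in> (adj ends (FA \<union> FB))\<^sup>*) \<longleftrightarrow>
     (\<forall>u\<in>A. \<forall>w\<in>A. (u, w) \<in> (adj ends FA)\<^sup>*) \<and> (\<forall>u\<in>B. \<forall>w\<in>B. (u, w) \<in> (adj ends FB)\<^sup>*)"
  proof
    assume "\<forall>u\<in>A \<union> B. \<forall>w\<in>A \<union> B. (u, w) \<in> (adj ends (FA \<union> FB))\<^sup>*"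
    then have conn: "\<forall>u\<in>A \<union> B. \<forall>w\<in>A \<union> B. (u, w) \<in> (adj ends FA \<union> adj ends FB)\<^sup>*"
      by (simp add: adj_Un)
    show "(\<forall>u\<in>A. \<forall>w\<in>A. (u, w) \<in> (adj ends FA)\<^sup>*) \<and> (\<forall>u\<in>B. \<forall>w\<in>B. (u, w) \<in> (adj ends FB)\<^sup>*)"
      using conn rtrancl_Un_cut_vertex_same_side[OF RA RB AB]
        rtrancl_Un_cut_vertex_same_side[OF RB RA BA] by (auto simp: sup_commute)
  next
    assume conn: "(\<forall>u\<in>A. \<forall>w\<in>A. (u, w) \<in> (adj ends FA)\<^sup>*) \<and> (\<forall>u\<in>B. \<forall>w\<in>B. (u, w) \<in> (adj ends FB)\<^sup>*)"
    have "(adj ends FA)\<^sup>* \<subseteq> (adj ends (FA \<union> FB))\<^sup>*" "(adj ends FB)\<^sup>* \<subseteq> (adj ends (FA \<union> FB))\<^sup>*"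
      by (intro rtrancl_mono adj_mono; auto)+
    moreover have "v \<in> A" "v \<in> B" using AB by auto
    ultimately have "\<forall>u\<in>A \<union> B. (u, v) \<in> (adj ends (FA \<union> FB))\<^sup>* \<and> (v, u) \<in> (adj ends (FA \<union> FB))\<^sup>*"
      using conn by blast
    then show "\<forall>u\<in>A \<union> B. \<forall>w\<in>A \<union> B. (u, w) \<in> (adj ends (FA \<union> FB))\<^sup>*"
      by (meson rtrancl_trans)
  qed
  show ?thesis
    using connected_iff acyclic_edges_Un_cut_vertex[OF AB FA FB] FA FB AB
    unfolding is_tree_def by auto
qed

lemma spanning_2forestsI:
  assumes "F1 \<subseteq> E" "F2 \<subseteq> E" "is_tree ends W1 F1" "is_tree ends W2 F2"
    "W1 \<inter> W2 = {}" "W1 \<union> W2 = V"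
  shows "{(W1, F1), (W2, F2)} \<in> spanning_2forests V E ends"
  unfolding spanning_2forests_def using assms by blast

lemma spanning_2forestsE_rooted:
  assumes "P \<in> spanning_2forests V E ends" "v \<in> V"
  obtains W1 F1 W2 F2 where "P = {(W1, F1), (W2, F2)}" "F1 \<subseteq> E" "F2 \<subseteq> E"
    "is_tree ends W1 F1" "is_tree ends W2 F2" "W1 \<inter> W2 = {}" "W1 \<union> W2 = V"
    "v \<in> W1" "v \<notin> W2"
proof -
  obtain W1 F1 W2 F2 where P: "P = {(W1, F1), (W2, F2)}" "F1 \<subseteq> E" "F2 \<subseteq> E"
    "is_tree ends W1 F1" "is_tree ends W2 F2" "W1 \<inter> W2 = {}" "W1 \<union> W2 = V"
    using assms(1) unfolding spanning_2forests_def by blast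
  show ?thesis
  proof (cases "v \<in> W1")
    case True
    then show ?thesis using that P by blast
  next
    case False
    then show ?thesis using that[of W2 F2 W1 F1] P assms(2) by (auto simp: insert_commute)
  qed
qed

lemma finite_spanning_2forests:
  assumes "finite V" "finite E"
  shows "finite (spanning_2forests V E ends)"
proof (rule finite_subset)
  show "spanning_2forests V E ends \<subseteq> Pow (Pow V \<times> Pow E)"
    unfolding spanning_2forests_def by blast
  show "finite (Pow (Pow V \<times> Pow E))" using assms by simp
qed

lemma mink_sq_uminus: "mink_sq (- x) = mink_sq x"
  unfolding mink_sq_def by simp

definition forest_term ::
  "'e set \<Rightarrow> ('e \<Rightarrow> 'v set) \<Rightarrow> ('v \<Rightarrow> real^4) \<Rightarrow> ('e \<Rightarrow> real) \<Rightarrow> ('v set \<times> 'e set) set \<Rightarrow> real"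
where
  "forest_term E ends \<rho> \<alpha> P =
     mink_sq (\<Sum>u\<in>fst (SOME t. t \<in> P). \<rho> u) * (\<Prod>e\<in>E - \<Union>(snd ` P). \<alpha> e)"

lemma phi_massless:
  "\<forall>e\<in>E. m e = 0 \<Longrightarrow>
    phi V E ends \<rho> m \<alpha> = (\<Sum>P\<in>spanning_2forests V E ends. forest_term E ends \<rho> \<alpha> P)"
  unfolding phi_def forest_term_def by simp

text \<open>SOME may pick either tree of the pair; by momentum conservation their momenta are opposite,
  so the choice does not affect the Minkowski square.\<close>

lemma mink_sq_sum_chosen_tree:
  assumes "finite V" and conserved: "(\<Sum>u\<in>V. \<rho> u) = 0"
    and P: "P \<in> spanning_2forests V E ends" and t: "(W, F) \<in> P"
  shows "mink_sq (\<Sum>u\<in>fst (SOME t. t \<in> P). \<rho> u) = mink_sq (\<Sum>u\<in>W. \<rho> u)"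
proof -
  obtain W1 F1 W2 F2 where P': "P = {(W1, F1), (W2, F2)}" "W1 \<inter> W2 = {}" "W1 \<union> W2 = V"
    using P unfolding spanning_2forests_def by blast
  have "(\<Sum>u\<in>V. \<rho> u) = (\<Sum>u\<in>W1. \<rho> u) + (\<Sum>u\<in>W2. \<rho> u)"
    using P' \<open>finite V\<close> by (metis finite_Un sum.union_disjoint)
  then have opposite: "(\<Sum>u\<in>W2. \<rho> u) = - (\<Sum>u\<in>W1. \<rho> u)"
    using conserved by (simp add: eq_neg_iff_add_eq_0 add.commute)
  have "(SOME t. t \<in> P) \<in> P" using t by (rule someI)
  then have "fst (SOME t. t \<in> P) \<in> {W1, W2}" using P' by auto
  moreover have "W \<in> {W1, W2}" using t P' by auto
  ultimately show ?thesis using opposite mink_sq_uminus by auto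
qed

lemma one_separation_sym:
  "one_separation V E ends A B \<Longrightarrow> one_separation V E ends B A"
  unfolding one_separation_def by (auto simp: insert_commute Int_commute)

definition two_forests_avoiding_within ::
  "'v set \<Rightarrow> 'e set \<Rightarrow> ('e \<Rightarrow> 'v set) \<Rightarrow> 'v \<Rightarrow> 'v set \<Rightarrow> ('v set \<times> 'e set) set set"
where
  "two_forests_avoiding_within V E ends v A =
     {Q\<in>spanning_2forests V E ends. \<exists>(W, F)\<in>Q. v \<notin> W \<and> W \<subseteq> A}"

locale cut_vertex_graph =
  fixes V :: "'v set" and E :: "'e set" and ends :: "'e \<Rightarrow> 'v set"
    and A B :: "'v set" and v :: 'v
  assumes graph: "wf_graph V E ends"
    and separation: "one_separation V E ends A B"
    and cut: "A \<inter> B = {v}"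
begin

abbreviation "EA \<equiv> induced_edges E ends A"
abbreviation "EB \<equiv> induced_edges E ends B"

lemma finite_V: "finite V" and finite_E: "finite E"
  and ends_E: "\<forall>e\<in>E. ends e \<subseteq> V \<and> card (ends e) = 2"
  using graph unfolding wf_graph_def by auto

lemma V_eq: "V = A \<union> B"
  using separation unfolding one_separation_def by auto

lemma cut_vertex_in: "v \<in> A" "v \<in> B" "v \<in> V"
  using cut V_eq by auto

lemma induced_edges_subset: "EA \<subseteq> E" "EB \<subseteq> E"
  unfolding induced_edges_def by auto

lemma induced_edges_ends: "\<forall>e\<in>EA. ends e \<subseteq> A" "\<forall>e\<in>EB. ends e \<subseteq> B"
  unfolding induced_edges_def by auto

lemma finite_induced_edges: "finite EA" "finite EB"
  using finite_E induced_edges_subset finite_subset by auto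

lemma E_eq_induced_edges: "E = EA \<union> EB"
proof -
  have "ends e \<subseteq> A \<or> ends e \<subseteq> B" if e: "e \<in> E" for e
  proof -
    obtain a b where ab: "ends e = {a, b}" using ends_E e by (meson card_2_iff)
    then have "a \<in> A \<union> B" "b \<in> A \<union> B" using ends_E e V_eq by auto
    show ?thesis
    proof (rule ccontr)
      assume "\<not> ?thesis"
      then have "(a \<in> A - B \<and> b \<in> B - A) \<or> (b \<in> A - B \<and> a \<in> B - A)"
        using ab \<open>a \<in> A \<union> B\<close> \<open>b \<in> A \<union> B\<close> by auto
      then show False
        using separation e ab unfolding one_separation_def by (metis insert_commute)
    qed
  qed
  then show ?thesis unfolding induced_edges_def by auto
qed

lemma induced_edges_disjoint: "EA \<inter> EB = {}"
proof (rule ccontr)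
  assume "EA \<inter> EB \<noteq> {}"
  then obtain e where "e \<in> E" "ends e \<subseteq> {v}" using cut unfolding induced_edges_def by auto
  moreover have "card (ends e) \<le> 1" if "ends e \<subseteq> {v}"
    using card_mono[OF _ that] by simp
  ultimately show False using ends_E by fastforce
qed

lemma prod_complement_split:
  assumes "FA \<subseteq> EA" "FB \<subseteq> EB"
  shows "(\<Prod>e\<in>E - (FA \<union> FB). \<alpha> e) = (\<Prod>e\<in>EA - FA. \<alpha> e) * (\<Prod>e\<in>EB - FB. \<alpha> e)"
proof -
  have "E - (FA \<union> FB) = (EA - FA) \<union> (EB - FB)"
    using E_eq_induced_edges induced_edges_disjoint assms by auto
  moreover have "(EA - FA) \<inter> (EB - FB) = {}" using induced_edges_disjoint by auto
  ultimately show ?thesis using finite_induced_edges by (simp add: prod.union_disjoint)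
qed

lemma tree_avoiding_cut_vertex_one_side:
  assumes "is_tree ends W F" "F \<subseteq> E" "W \<subseteq> V" "v \<notin> W"
  shows "W \<subseteq> A \<or> W \<subseteq> B"
proof (rule ccontr)
  assume "\<not> (W \<subseteq> A \<or> W \<subseteq> B)"
  then obtain a b where ab: "a \<in> W" "a \<notin> B" "b \<in> W" "b \<notin> A" by blast
  have "a \<in> A" using ab assms(3) V_eq by blast
  have "(a, b) \<in> (adj ends F)\<^sup>*" using assms(1) ab unfolding is_tree_def by blast
  moreover have "F = (F \<inter> EA) \<union> (F \<inter> EB)" using assms(2) E_eq_induced_edges by blast
  ultimately have path: "(a, b) \<in> (adj ends (F \<inter> EA) \<union> adj ends (F \<inter> EB))\<^sup>*"
    by (metis adj_Un)
  have "adj ends (F \<inter> EA) \<subseteq> A \<times> A" "adj ends (F \<inter> EB) \<subseteq> B \<times> B"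
    using induced_edges_ends by (intro adj_subset_Times; blast)+
  then have "(a, v) \<in> (adj ends (F \<inter> EA))\<^sup>*"
    using rtrancl_Un_cut_vertex[OF _ _ cut path \<open>a \<in> A\<close>] ab by blast
  moreover have "(adj ends (F \<inter> EA))\<^sup>* \<subseteq> (adj ends F)\<^sup>*"
    by (intro rtrancl_mono adj_mono) blast
  moreover have "\<forall>e\<in>F. ends e \<subseteq> W" using assms(1) unfolding is_tree_def by blast
  ultimately have "v \<in> W" using rtrancl_adj_closed ab(1) by (metis subsetD)
  then show False using assms(4) by blast
qed

lemma spanning_2forests_split:
  "spanning_2forests V E ends =
     two_forests_avoiding_within V E ends v A \<union> two_forests_avoiding_within V E ends v B"
  "two_forests_avoiding_within V E ends v A \<inter> two_forests_avoiding_within V E ends v B = {}"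
proof -
  have "Q \<in> two_forests_avoiding_within V E ends v A \<union> two_forests_avoiding_within V E ends v B"
    if Q: "Q \<in> spanning_2forests V E ends" for Q
  proof -
    obtain W1 F1 W2 F2 where P: "Q = {(W1, F1), (W2, F2)}" "F1 \<subseteq> E" "F2 \<subseteq> E"
      "is_tree ends W1 F1" "is_tree ends W2 F2" "W1 \<inter> W2 = {}" "W1 \<union> W2 = V" "v \<in> W1" "v \<notin> W2"
      by (rule spanning_2forestsE_rooted[OF Q cut_vertex_in(3)])
    have "W2 \<subseteq> V" using P(7) by blast
    then have "W2 \<subseteq> A \<or> W2 \<subseteq> B"
      using tree_avoiding_cut_vertex_one_side[OF P(5,3)] P(9) by blast
    then show ?thesis using Q P(1,9) unfolding two_forests_avoiding_within_def by blast
  qed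
  then show "spanning_2forests V E ends =
     two_forests_avoiding_within V E ends v A \<union> two_forests_avoiding_within V E ends v B"
    unfolding two_forests_avoiding_within_def by blast
  have False
    if Q: "Q \<in> spanning_2forests V E ends"
      and sides: "\<exists>(W, F)\<in>Q. v \<notin> W \<and> W \<subseteq> A" "\<exists>(W, F)\<in>Q. v \<notin> W \<and> W \<subseteq> B" for Q
  proof -
    obtain W1 F1 W2 F2 where P: "Q = {(W1, F1), (W2, F2)}" "F1 \<subseteq> E" "F2 \<subseteq> E"
      "is_tree ends W1 F1" "is_tree ends W2 F2" "W1 \<inter> W2 = {}" "W1 \<union> W2 = V" "v \<in> W1" "v \<notin> W2"
      by (rule spanning_2forestsE_rooted[OF Q cut_vertex_in(3)])
    have "W2 \<subseteq> A \<inter> B" using sides P(1,8) by auto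
    then have "W2 = {}" using cut P(9) by auto
    then show False using P(5) unfolding is_tree_def by blast
  qed
  then show "two_forests_avoiding_within V E ends v A \<inter> two_forests_avoiding_within V E ends v B = {}"
    unfolding two_forests_avoiding_within_def by blast
qed

lemma sum_spanning_2forests_split:
  "(\<Sum>Q\<in>spanning_2forests V E ends. f Q) =
     (\<Sum>Q\<in>two_forests_avoiding_within V E ends v A. f Q) +
     (\<Sum>Q\<in>two_forests_avoiding_within V E ends v B. f Q)"
proof -
  have "finite (two_forests_avoiding_within V E ends v A)"
    "finite (two_forests_avoiding_within V E ends v B)"
    using finite_spanning_2forests[OF finite_V finite_E] spanning_2forests_split(1)
    by (metis finite_Un)+
  then show ?thesis
    unfolding spanning_2forests_split(1)
    by (rule sum.union_disjoint[OF _ _ spanning_2forests_split(2)])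
qed

definition extend_2forest :: "('v set \<times> 'e set) set \<times> 'e set \<Rightarrow> ('v set \<times> 'e set) set" where
  "extend_2forest = (\<lambda>(P, TB). (\<lambda>(W, F). if v \<in> W then (W \<union> B, F \<union> TB) else (W, F)) ` P)"

definition restrict_2forest :: "('v set \<times> 'e set) set \<Rightarrow> ('v set \<times> 'e set) set \<times> 'e set" where
  "restrict_2forest Q = ((\<lambda>(W, F). (W \<inter> A, F \<inter> EA)) ` Q, \<Union>(snd ` Q) \<inter> EB)"

lemma extend_2forestE:
  assumes P: "P \<in> spanning_2forests A EA ends" and TB: "TB \<in> spanning_trees B EB ends"
  obtains W1 F1 W2 F2 where "P = {(W1, F1), (W2, F2)}" "v \<in> W1" "v \<notin> W2" "W1 \<union> W2 = A"
    "F1 \<subseteq> EA" "F2 \<subseteq> EA" "TB \<subseteq> EB"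
    "extend_2forest (P, TB) = {(W1 \<union> B, F1 \<union> TB), (W2, F2)}"
    "extend_2forest (P, TB) \<in> two_forests_avoiding_within V E ends v A"
proof -
  obtain W1 F1 W2 F2 where P': "P = {(W1, F1), (W2, F2)}" "F1 \<subseteq> EA" "F2 \<subseteq> EA"
    "is_tree ends W1 F1" "is_tree ends W2 F2" "W1 \<inter> W2 = {}" "W1 \<union> W2 = A" "v \<in> W1" "v \<notin> W2"
    by (rule spanning_2forestsE_rooted[OF P cut_vertex_in(1)])
  have TB': "TB \<subseteq> EB" "is_tree ends B TB" using TB unfolding spanning_trees_def by auto
  have extend: "extend_2forest (P, TB) = {(W1 \<union> B, F1 \<union> TB), (W2, F2)}"
    using P'(1,8,9) unfolding extend_2forest_def by simp
  have cut_W1: "W1 \<inter> B = {v}" using P'(7,8) cut by blast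
  have ends_F1: "\<forall>e\<in>F1. ends e \<subseteq> W1" using P'(4) unfolding is_tree_def by blast
  have ends_TB: "\<forall>e\<in>TB. ends e \<subseteq> B" using TB'(1) induced_edges_ends by blast
  have tree: "is_tree ends (W1 \<union> B) (F1 \<union> TB)"
    using P'(4) TB'(2) by (simp add: is_tree_Un_cut_vertex[OF cut_W1 ends_F1 ends_TB])
  have "F1 \<union> TB \<subseteq> E" "F2 \<subseteq> E" using P'(2,3) TB'(1) induced_edges_subset by auto
  moreover have "(W1 \<union> B) \<inter> W2 = {}" using P'(6,7,9) cut by auto
  moreover have "(W1 \<union> B) \<union> W2 = V" using P'(7) V_eq by auto
  ultimately have "{(W1 \<union> B, F1 \<union> TB), (W2, F2)} \<in> spanning_2forests V E ends"
    using spanning_2forestsI[OF _ _ tree P'(5)] by simp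
  then have "extend_2forest (P, TB) \<in> two_forests_avoiding_within V E ends v A"
    unfolding extend two_forests_avoiding_within_def using P'(7,9) by blast
  then show ?thesis by (rule that[OF P'(1,8,9,7,2,3) TB'(1) extend])
qed

lemma restrict_2forestE:
  assumes Q: "Q \<in> two_forests_avoiding_within V E ends v A"
  obtains W1 F1 W2 F2 where "Q = {(W1, F1), (W2, F2)}" "v \<in> W1" "v \<notin> W2"
    "W1 = (W1 \<inter> A) \<union> B" "F1 = (F1 \<inter> EA) \<union> (F1 \<inter> EB)" "W2 \<subseteq> A" "F2 \<subseteq> EA"
    "restrict_2forest Q = ({(W1 \<inter> A, F1 \<inter> EA), (W2, F2)}, F1 \<inter> EB)"
    "restrict_2forest Q \<in> spanning_2forests A EA ends \<times> spanning_trees B EB ends"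
proof -
  from Q have QV: "Q \<in> spanning_2forests V E ends" and side: "\<exists>(W, F)\<in>Q. v \<notin> W \<and> W \<subseteq> A"
    unfolding two_forests_avoiding_within_def by auto
  obtain W1 F1 W2 F2 where P: "Q = {(W1, F1), (W2, F2)}" "F1 \<subseteq> E" "F2 \<subseteq> E"
    "is_tree ends W1 F1" "is_tree ends W2 F2" "W1 \<inter> W2 = {}" "W1 \<union> W2 = V" "v \<in> W1" "v \<notin> W2"
    by (rule spanning_2forestsE_rooted[OF QV cut_vertex_in(3)])
  have W2A: "W2 \<subseteq> A" using side P(1,8) by auto
  have F2A: "F2 \<subseteq> EA"
    using P(3,5) W2A unfolding is_tree_def induced_edges_def by blast
  have "F2 \<inter> EB = {}" using F2A induced_edges_disjoint by blast
  then have restrict: "restrict_2forest Q = ({(W1 \<inter> A, F1 \<inter> EA), (W2, F2)}, F1 \<inter> EB)"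
    using P(1) W2A F2A unfolding restrict_2forest_def by auto
  have "B \<subseteq> W1"
  proof
    fix x assume "x \<in> B"
    then have "x \<in> W1 \<union> W2" using P(7) V_eq by simp
    moreover have "x \<notin> W2" using \<open>x \<in> B\<close> W2A cut P(9) by auto
    ultimately show "x \<in> W1" by simp
  qed
  then have W1_eq: "W1 = (W1 \<inter> A) \<union> B" using P(7) V_eq by auto
  have F1_eq: "F1 = (F1 \<inter> EA) \<union> (F1 \<inter> EB)" using P(2) E_eq_induced_edges by auto
  have cut_W1: "(W1 \<inter> A) \<inter> B = {v}" using P(8) cut by blast
  have ends_F1A: "\<forall>e\<in>F1 \<inter> EA. ends e \<subseteq> W1 \<inter> A"
    using P(4) induced_edges_ends unfolding is_tree_def by blast
  have ends_F1B: "\<forall>e\<in>F1 \<inter> EB. ends e \<subseteq> B" using induced_edges_ends by blast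
  have "is_tree ends ((W1 \<inter> A) \<union> B) ((F1 \<inter> EA) \<union> (F1 \<inter> EB))"
    using P(4) W1_eq F1_eq by simp
  then have trees: "is_tree ends (W1 \<inter> A) (F1 \<inter> EA)" "is_tree ends B (F1 \<inter> EB)"
    by (simp_all add: is_tree_Un_cut_vertex[OF cut_W1 ends_F1A ends_F1B])
  have "(W1 \<inter> A) \<inter> W2 = {}" "(W1 \<inter> A) \<union> W2 = A" using P(6,7) W2A V_eq by auto
  then have "{(W1 \<inter> A, F1 \<inter> EA), (W2, F2)} \<in> spanning_2forests A EA ends"
    using spanning_2forestsI[OF _ F2A trees(1) P(5)] by simp
  moreover have "F1 \<inter> EB \<in> spanning_trees B EB ends"
    using trees(2) unfolding spanning_trees_def by blast
  ultimately have "restrict_2forest Q \<in> spanning_2forests A EA ends \<times> spanning_trees B EB ends"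
    using restrict by simp
  then show ?thesis by (rule that[OF P(1,8,9) W1_eq F1_eq W2A F2A restrict])
qed

lemma restrict_extend_2forest:
  assumes P: "P \<in> spanning_2forests A EA ends" and TB: "TB \<in> spanning_trees B EB ends"
  shows "restrict_2forest (extend_2forest (P, TB)) = (P, TB)"
proof -
  obtain W1 F1 W2 F2 where P: "P = {(W1, F1), (W2, F2)}" "v \<in> W1" "v \<notin> W2" "W1 \<union> W2 = A"
    "F1 \<subseteq> EA" "F2 \<subseteq> EA" "TB \<subseteq> EB"
    and extend: "extend_2forest (P, TB) = {(W1 \<union> B, F1 \<union> TB), (W2, F2)}"
    and Q: "extend_2forest (P, TB) \<in> two_forests_avoiding_within V E ends v A"
    by (rule extend_2forestE[OF P TB])
  have "(W1 \<union> B) \<inter> A = W1" "W2 \<inter> A = W2" using P(2,4) cut by blast+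
  moreover have "(F1 \<union> TB) \<inter> EA = F1" "F2 \<inter> EA = F2" "(F1 \<union> TB \<union> F2) \<inter> EB = TB"
    using P(5-7) induced_edges_disjoint by blast+
  moreover have "\<Union>(snd ` extend_2forest (P, TB)) = F1 \<union> TB \<union> F2" using extend by auto
  ultimately show ?thesis unfolding restrict_2forest_def using extend P(1) by simp
qed

lemma extend_restrict_2forest:
  assumes "Q \<in> two_forests_avoiding_within V E ends v A"
  shows "extend_2forest (restrict_2forest Q) = Q"
proof -
  obtain W1 F1 W2 F2 where Q: "Q = {(W1, F1), (W2, F2)}" "v \<in> W1" "v \<notin> W2"
    "W1 = (W1 \<inter> A) \<union> B" "F1 = (F1 \<inter> EA) \<union> (F1 \<inter> EB)" "W2 \<subseteq> A" "F2 \<subseteq> EA"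
    and restrict: "restrict_2forest Q = ({(W1 \<inter> A, F1 \<inter> EA), (W2, F2)}, F1 \<inter> EB)"
    and "restrict_2forest Q \<in> spanning_2forests A EA ends \<times> spanning_trees B EB ends"
    by (rule restrict_2forestE[OF assms])
  have "v \<in> W1 \<inter> A" using Q(2) cut_vertex_in by blast
  then show ?thesis
    using restrict Q(1,3) unfolding extend_2forest_def by (simp, metis Q(4,5))
qed

lemma forest_term_extend_2forest:
  assumes conserved: "(\<Sum>u\<in>V. \<rho> u) = 0" and conserved_A: "(\<Sum>u\<in>A. \<rho>' u) = 0"
    and agree: "\<forall>u\<in>A - {v}. \<rho>' u = \<rho> u"
    and P: "P \<in> spanning_2forests A EA ends" and TB: "TB \<in> spanning_trees B EB ends"
  shows "forest_term E ends \<rho> \<alpha> (extend_2forest (P, TB)) =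
    forest_term EA ends \<rho>' \<alpha> P * (\<Prod>e\<in>EB - TB. \<alpha> e)"
proof -
  obtain W1 F1 W2 F2 where P': "P = {(W1, F1), (W2, F2)}" "v \<in> W1" "v \<notin> W2" "W1 \<union> W2 = A"
    "F1 \<subseteq> EA" "F2 \<subseteq> EA" "TB \<subseteq> EB"
    and extend: "extend_2forest (P, TB) = {(W1 \<union> B, F1 \<union> TB), (W2, F2)}"
    and Q: "extend_2forest (P, TB) \<in> two_forests_avoiding_within V E ends v A"
    by (rule extend_2forestE[OF P TB])
  have QV: "{(W1 \<union> B, F1 \<union> TB), (W2, F2)} \<in> spanning_2forests V E ends"
    using Q extend unfolding two_forests_avoiding_within_def by simp
  have "finite A" using finite_V V_eq by auto
  have "(\<Sum>u\<in>W2. \<rho>' u) = (\<Sum>u\<in>W2. \<rho> u)" using agree P'(3,4) by (intro sum.cong) auto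
  then have "mink_sq (\<Sum>u\<in>fst (SOME t. t \<in> P). \<rho>' u) =
      mink_sq (\<Sum>u\<in>fst (SOME t. t \<in> extend_2forest (P, TB)). \<rho> u)"
    using mink_sq_sum_chosen_tree[OF \<open>finite A\<close> conserved_A P, of W2 F2]
      mink_sq_sum_chosen_tree[OF finite_V conserved QV, of W2 F2] P'(1) extend by simp
  moreover have "(\<Prod>e\<in>E - (F1 \<union> TB \<union> F2). \<alpha> e) =
      (\<Prod>e\<in>EA - (F1 \<union> F2). \<alpha> e) * (\<Prod>e\<in>EB - TB. \<alpha> e)"
    using prod_complement_split[of "F1 \<union> F2" TB \<alpha>] P'(5-7) by (simp add: Un_ac)
  ultimately show ?thesis unfolding forest_term_def using P'(1) extend by simp
qed

lemma sum_two_forests_avoiding_within: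
  assumes conserved: "(\<Sum>u\<in>V. \<rho> u) = 0" and conserved_A: "(\<Sum>u\<in>A. \<rho>' u) = 0"
    and agree: "\<forall>u\<in>A - {v}. \<rho>' u = \<rho> u"
  shows "(\<Sum>Q\<in>two_forests_avoiding_within V E ends v A. forest_term E ends \<rho> \<alpha> Q)
    = (\<Sum>P\<in>spanning_2forests A EA ends. forest_term EA ends \<rho>' \<alpha> P) * psi B EB ends \<alpha>"
proof -
  have "(\<Sum>P\<in>spanning_2forests A EA ends. forest_term EA ends \<rho>' \<alpha> P) * psi B EB ends \<alpha> =
     (\<Sum>(P, TB)\<in>spanning_2forests A EA ends \<times> spanning_trees B EB ends.
        forest_term EA ends \<rho>' \<alpha> P * (\<Prod>e\<in>EB - TB. \<alpha> e))"
    unfolding psi_def sum_product sum.cartesian_product by simp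
  also have "\<dots> = (\<Sum>Q\<in>two_forests_avoiding_within V E ends v A. forest_term E ends \<rho> \<alpha> Q)"
  proof (rule sum.reindex_bij_witness[where i=restrict_2forest and j=extend_2forest])
    fix a assume "a \<in> spanning_2forests A EA ends \<times> spanning_trees B EB ends"
    then obtain P TB where a: "a = (P, TB)" and P: "P \<in> spanning_2forests A EA ends"
      and TB: "TB \<in> spanning_trees B EB ends" by blast
    show "restrict_2forest (extend_2forest a) = a"
      unfolding a by (rule restrict_extend_2forest[OF P TB])
    show "extend_2forest a \<in> two_forests_avoiding_within V E ends v A"
      unfolding a by (rule extend_2forestE[OF P TB])
    show "forest_term E ends \<rho> \<alpha> (extend_2forest a) =
        (case a of (P, TB) \<Rightarrow> forest_term EA ends \<rho>' \<alpha> P * (\<Prod>e\<in>EB - TB. \<alpha> e))"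
      unfolding a using forest_term_extend_2forest[OF conserved conserved_A agree P TB] by simp
  next
    fix Q assume Q: "Q \<in> two_forests_avoiding_within V E ends v A"
    show "extend_2forest (restrict_2forest Q) = Q" by (rule extend_restrict_2forest[OF Q])
    show "restrict_2forest Q \<in> spanning_2forests A EA ends \<times> spanning_trees B EB ends"
      by (rule restrict_2forestE[OF Q])
  qed
  finally show ?thesis by simp
qed

end

lemma cut_vertex_graph_swap:
  "cut_vertex_graph V E ends A B v \<Longrightarrow> cut_vertex_graph V E ends B A v"
  unfolding cut_vertex_graph_def using one_separation_sym by blast

lemma sum_update_cut_vertex:
  fixes \<rho> :: "'v \<Rightarrow> 'a::comm_monoid_add"
  assumes "finite A" "v \<in> A" "X \<inter> (A - {v}) = {x1, x2}" "x1 \<noteq> x2"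
    and "\<forall>u. u \<notin> X \<longrightarrow> \<rho> u = 0"
  shows "(\<Sum>u\<in>A. (\<rho>(v := c)) u) = c + (\<rho> x1 + \<rho> x2)"
proof -
  have "(\<Sum>u\<in>A. (\<rho>(v := c)) u) = c + (\<Sum>u\<in>A - {v}. \<rho> u)"
    using assms(1,2) by (simp add: sum.remove)
  also have "(\<Sum>u\<in>A - {v}. \<rho> u) = (\<Sum>u\<in>{x1, x2}. \<rho> u)"
    using assms by (intro sum.mono_neutral_right) auto
  finally show ?thesis using assms(4) by simp
qed

theorem mainTheorem10:
  fixes V :: "'v set" and E :: "'e set" and ends :: "'e \<Rightarrow> 'v set"
    and \<rho> :: "'v \<Rightarrow> real^4" and m \<alpha> :: "'e \<Rightarrow> real"
    and X A B :: "'v set" and v x1 x2 x3 x4 :: 'v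
  assumes G: "wf_graph V E ends"
    and massless: "\<forall>e\<in>E. m e = 0"
    and X: "X = {x1, x2, x3, x4}" "distinct [x1, x2, x3, x4]" "X \<subseteq> V"
    and ext: "\<forall>u. u \<notin> X \<longrightarrow> \<rho> u = 0"
    and cons: "(\<Sum>u\<in>V. \<rho> u) = 0"
    and onshell: "\<forall>x\<in>X. mink_sq (\<rho> x) = 0"
    and sep: "one_separation V E ends A B" "A \<inter> B = {v}"
    and XA: "X \<inter> (A - {v}) = {x1, x2}"
    and XB: "X \<inter> (B - {v}) = {x3, x4}"
  shows "phi V E ends \<rho> m \<alpha> =
      phi A (induced_edges E ends A) ends (\<rho>(v := \<rho> x3 + \<rho> x4)) m \<alpha>
        * psi B (induced_edges E ends B) ends \<alpha>
    + phi B (induced_edges E ends B) ends (\<rho>(v := \<rho> x1 + \<rho> x2)) m \<alpha>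
        * psi A (induced_edges E ends A) ends \<alpha>"
proof -
  interpret AB: cut_vertex_graph V E ends A B v using G sep by unfold_locales
  interpret BA: cut_vertex_graph V E ends B A v by (rule cut_vertex_graph_swap) unfold_locales
  have "(\<Sum>u\<in>V. \<rho> u) = (\<Sum>u\<in>X. \<rho> u)"
    using AB.finite_V X(3) ext by (intro sum.mono_neutral_right) auto
  then have total: "\<rho> x1 + \<rho> x2 + (\<rho> x3 + \<rho> x4) = 0"
    using X(1,2) cons by (simp add: add.assoc)
  have "finite A" "finite B" using AB.finite_V AB.V_eq by auto
  then have conserved_A: "(\<Sum>u\<in>A. (\<rho>(v := \<rho> x3 + \<rho> x4)) u) = 0"
    and conserved_B: "(\<Sum>u\<in>B. (\<rho>(v := \<rho> x1 + \<rho> x2)) u) = 0"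
    using sum_update_cut_vertex[OF _ AB.cut_vertex_in(1) XA _ ext]
      sum_update_cut_vertex[OF _ AB.cut_vertex_in(2) XB _ ext] X(2) total
    by (simp_all add: add.commute)
  have agree: "\<forall>u\<in>A - {v}. (\<rho>(v := \<rho> x3 + \<rho> x4)) u = \<rho> u"
    "\<forall>u\<in>B - {v}. (\<rho>(v := \<rho> x1 + \<rho> x2)) u = \<rho> u" by simp_all
  have massless_induced: "\<forall>e\<in>AB.EA. m e = 0" "\<forall>e\<in>AB.EB. m e = 0"
    using massless AB.induced_edges_subset by blast+
  have "phi V E ends \<rho> m \<alpha> =
      (\<Sum>Q\<in>two_forests_avoiding_within V E ends v A. forest_term E ends \<rho> \<alpha> Q) +
      (\<Sum>Q\<in>two_forests_avoiding_within V E ends v B. forest_term E ends \<rho> \<alpha> Q)"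
    unfolding phi_massless[OF massless] by (rule AB.sum_spanning_2forests_split)
  also have "\<dots> =
      phi A AB.EA ends (\<rho>(v := \<rho> x3 + \<rho> x4)) m \<alpha> * psi B AB.EB ends \<alpha>
    + phi B AB.EB ends (\<rho>(v := \<rho> x1 + \<rho> x2)) m \<alpha> * psi A AB.EA ends \<alpha>"
    unfolding phi_massless[OF massless_induced(1)] phi_massless[OF massless_induced(2)]
    using AB.sum_two_forests_avoiding_within[OF cons conserved_A agree(1)]
      BA.sum_two_forests_avoiding_within[OF cons conserved_B agree(2)] by (simp only:)
  finally show ?thesis .
qed

end
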